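(* For fixed $x,y\ge 1$, let $a_{x,y,n}$ denote the probability that the $(x,y)$ edge-addition process on $n$ vertices generates an $(x,y)$ task-dependency graph. Then $\lim_{n\to\infty}a_{x,y,n}=1$.
   Context: A task-dependency graph is a finite directed acyclic graph (no loops, no multiple edges). A vertex is initial if it has in-degree $0$ and terminal if it has out-degree $0$ (an isolated vertex is both). An $(x,y)$ task-dependency graph has exactly $x$ initial and exactly $y$ terminal vertices. The $(x,y)$ edge-addition process on $n$ vertices: start with the empty graph on $\{1,\dots,n\}$ and repeatedly add, uniformly at random, an edge $(a,b)$ with $a<b$ not yet present; if an addition would cause fewer than $x$ initial vertices or fewer than $y$ terminal vertices, it is cancelled. The process halts if the graph after some edge addition is an $(x,y)$ task-dependency graph, or if no more edges can be added; the result is the final graph. *)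

theory Defs
  imports "HOL-Probability.Probability"
begin

text \<open>A graph on the vertex set {1..n} is represented by its edge set E, a set of
  pairs (a,b) with 1 \<le> a < b \<le> n (edge from a to b).  Such graphs are automatically
  acyclic and have no loops or multiple edges.\<close>

definition initial_vertices :: "nat \<Rightarrow> (nat \<times> nat) set \<Rightarrow> nat set" where
  "initial_vertices n E = {v \<in> {1..n}. \<not> (\<exists>u. (u, v) \<in> E)}"

definition terminal_vertices :: "nat \<Rightarrow> (nat \<times> nat) set \<Rightarrow> nat set" where
  "terminal_vertices n E = {v \<in> {1..n}. \<not> (\<exists>w. (v, w) \<in> E)}"

definition is_tdg :: "nat \<Rightarrow> nat \<Rightarrow> nat \<Rightarrow> (nat \<times> nat) set \<Rightarrow> bool" where
  "is_tdg x y n E \<longleftrightarrow> card (initial_vertices n E) = x \<and> card (terminal_vertices n E) = y"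

definition allowed_edges :: "nat \<Rightarrow> nat \<Rightarrow> nat \<Rightarrow> (nat \<times> nat) set \<Rightarrow> (nat \<times> nat) set" where
  "allowed_edges x y n E = {(a, b). 1 \<le> a \<and> a < b \<and> b \<le> n \<and> (a, b) \<notin> E \<and>
      card (initial_vertices n (insert (a, b) E)) \<ge> x \<and>
      card (terminal_vertices n (insert (a, b) E)) \<ge> y}"

text \<open>Drawing uniformly
  among non-present edges and cancelling forbidden ones is equivalent (in distribution of
  the next successful addition) to drawing uniformly among the allowed edges, since a
  cancelled edge stays cancelled forever (initial/terminal sets only shrink).\<close>
primrec edge_process_fuel ::
  "nat \<Rightarrow> nat \<Rightarrow> nat \<Rightarrow> nat \<Rightarrow> (nat \<times> nat) set \<Rightarrow> (nat \<times> nat) set pmf" where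
  "edge_process_fuel x y n 0 E = return_pmf E"
| "edge_process_fuel x y n (Suc k) E =
     (if allowed_edges x y n E = {} then return_pmf E
      else pmf_of_set (allowed_edges x y n E) \<bind> (\<lambda>e.
             if is_tdg x y n (insert e E) then return_pmf (insert e E)
             else edge_process_fuel x y n k (insert e E)))"

text \<open>The final graph of the (x,y) edge-addition process on n vertices; fuel n*n exceeds
  the maximal number n(n-1)/2 of edges, so the fuel never runs out.\<close>
definition edge_process :: "nat \<Rightarrow> nat \<Rightarrow> nat \<Rightarrow> (nat \<times> nat) set pmf" where
  "edge_process x y n = edge_process_fuel x y n (n * n) {}"

end

(* The failure probability is bounded by a potential whose expectation never increases along
   the process. Write I and T for the sets of initial and terminal vertices and
   w_k(t) = prod_{s=k+1..t} 2s/(2s+1). The potential of a graph is w_y(|T|) if vertex 1 is still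
   terminal (else 0), plus the mirror-image term w_x(|I|) if vertex n is still initial.
   The process fails only by getting stuck, and a stuck graph that is not an (x,y) graph either
   has |I| > x, and then 1 is terminal and |T| = y (otherwise (1,n) could be added), or has
   |I| = x, and symmetrically n is initial; either way its potential is at least 1.
   For n >= 2(x+y) the potential is a supermartingale: among the allowed edges, at least n/2 leave
   vertex 1 and kill the term w_y(|T|), while at most |T| n leave another terminal vertex and
   raise it by the factor w_y(|T|-1)/w_y(|T|) = 1 + 1/(2|T|). Hence the failure probability is at
   most w_y(n) + w_x(n), and w_k(n)^2 <= (k+1)/(n+1) tends to 0. *)

theory Submission
  imports Defs
begin

lemma initial_vertices_insert:
  "initial_vertices n (insert e E) = initial_vertices n E - {snd e}"
  by (cases e) (auto simp: initial_vertices_def)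

lemma terminal_vertices_insert:
  "terminal_vertices n (insert e E) = terminal_vertices n E - {fst e}"
  by (cases e) (auto simp: terminal_vertices_def)

lemma initial_vertices_subset: "initial_vertices n E \<subseteq> {1..n}"
  by (auto simp: initial_vertices_def)

lemma terminal_vertices_subset: "terminal_vertices n E \<subseteq> {1..n}"
  by (auto simp: terminal_vertices_def)

lemma finite_initial_vertices [simp]: "finite (initial_vertices n E)"
  using finite_subset[OF initial_vertices_subset] by blast

lemma finite_terminal_vertices [simp]: "finite (terminal_vertices n E)"
  using finite_subset[OF terminal_vertices_subset] by blast

lemma initial_vertices_empty [simp]: "initial_vertices n {} = {1..n}"
  by (auto simp: initial_vertices_def)

lemma terminal_vertices_empty [simp]: "terminal_vertices n {} = {1..n}"
  by (auto simp: terminal_vertices_def)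

lemma initial_vertices_antimono: "E \<subseteq> F \<Longrightarrow> initial_vertices n F \<subseteq> initial_vertices n E"
  by (auto simp: initial_vertices_def)

lemma terminal_vertices_antimono: "E \<subseteq> F \<Longrightarrow> terminal_vertices n F \<subseteq> terminal_vertices n E"
  by (auto simp: terminal_vertices_def)

lemma mem_allowed_edges:
  "(a, b) \<in> allowed_edges x y n E \<longleftrightarrow> 1 \<le> a \<and> a < b \<and> b \<le> n \<and> (a, b) \<notin> E \<and>
     x \<le> card (initial_vertices n E - {b}) \<and> y \<le> card (terminal_vertices n E - {a})"
  by (simp add: allowed_edges_def initial_vertices_insert terminal_vertices_insert)

definition edge_slots :: "nat \<Rightarrow> (nat \<times> nat) set" where
  "edge_slots n = {(a, b). 1 \<le> a \<and> a < b \<and> b \<le> n}"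

lemma mem_allowed_edges_iff:
  "e \<in> allowed_edges x y n E \<longleftrightarrow> e \<in> edge_slots n \<and> e \<notin> E \<and>
     x \<le> card (initial_vertices n (insert e E)) \<and> y \<le> card (terminal_vertices n (insert e E))"
  by (cases e) (simp add: allowed_edges_def edge_slots_def)

lemma allowed_edges_subset: "allowed_edges x y n E \<subseteq> {1..n} \<times> {1..n}"
  by (auto simp: allowed_edges_def)

lemma finite_allowed_edges [simp]: "finite (allowed_edges x y n E)"
  using finite_subset[OF allowed_edges_subset] by blast

lemma card_allowed_edges_le: "card (allowed_edges x y n E) \<le> n * n"
  using card_mono[OF _ allowed_edges_subset] by (simp add: card_cartesian_product)

lemma allowed_edges_insert_subset:
  "allowed_edges x y n (insert e E) \<subseteq> allowed_edges x y n E - {e}"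
proof
  fix d assume d: "d \<in> allowed_edges x y n (insert e E)"
  have sub: "insert d E \<subseteq> insert d (insert e E)" by blast
  have "card (initial_vertices n (insert d (insert e E))) \<le> card (initial_vertices n (insert d E))"
    by (rule card_mono[OF finite_initial_vertices initial_vertices_antimono[OF sub]])
  moreover have "card (terminal_vertices n (insert d (insert e E))) \<le> card (terminal_vertices n (insert d E))"
    by (rule card_mono[OF finite_terminal_vertices terminal_vertices_antimono[OF sub]])
  ultimately show "d \<in> allowed_edges x y n E - {e}"
    using d by (cases d) (simp add: allowed_edges_def)
qed

lemma card_allowed_edges_insert:
  assumes "e \<in> allowed_edges x y n E"
  shows "card (allowed_edges x y n (insert e E)) < card (allowed_edges x y n E)"
proof (rule psubset_card_mono[OF finite_allowed_edges])
  show "allowed_edges x y n (insert e E) \<subset> allowed_edges x y n E"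
    using allowed_edges_insert_subset assms by blast
qed

(* Reversing the vertex order, v \<mapsto> n + 1 - v, swaps initial and terminal vertices and hence
   the roles of x and y. *)
definition mirror_edge :: "nat \<Rightarrow> nat \<times> nat \<Rightarrow> nat \<times> nat" where
  "mirror_edge n e = (Suc n - snd e, Suc n - fst e)"

definition mirror_graph :: "nat \<Rightarrow> (nat \<times> nat) set \<Rightarrow> (nat \<times> nat) set" where
  "mirror_graph n E = mirror_edge n ` E"

lemma terminal_vertices_mirror_graph:
  "terminal_vertices n (mirror_graph n E) = (\<lambda>v. Suc n - v) ` initial_vertices n E"
proof (intro set_eqI iffI)
  fix v assume v: "v \<in> terminal_vertices n (mirror_graph n E)"
  have "(a, Suc n - v) \<notin> E" for a
  proof
    assume "(a, Suc n - v) \<in> E"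
    then have "mirror_edge n (a, Suc n - v) \<in> mirror_graph n E" by (simp add: mirror_graph_def)
    moreover have "mirror_edge n (a, Suc n - v) = (v, Suc n - a)"
      using v by (auto simp: terminal_vertices_def mirror_edge_def)
    ultimately show False using v by (auto simp: terminal_vertices_def)
  qed
  with v have "Suc n - v \<in> initial_vertices n E" "v = Suc n - (Suc n - v)"
    by (auto simp: initial_vertices_def terminal_vertices_def)
  then show "v \<in> (\<lambda>v. Suc n - v) ` initial_vertices n E" by blast
next
  fix v assume "v \<in> (\<lambda>v. Suc n - v) ` initial_vertices n E"
  then obtain u where u: "v = Suc n - u" "u \<in> {1..n}" "\<And>a. (a, u) \<notin> E"
    by (auto simp: initial_vertices_def)
  have "(v, w) \<notin> mirror_graph n E" for w
  proof
    assume "(v, w) \<in> mirror_graph n E"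
    then obtain a b where "(a, b) \<in> E" "v = Suc n - b" by (auto simp: mirror_graph_def mirror_edge_def)
    moreover from this u have "b = u" by auto
    ultimately show False using u by simp
  qed
  with u show "v \<in> terminal_vertices n (mirror_graph n E)"
    by (auto simp: terminal_vertices_def)
qed

lemma initial_vertices_mirror_graph:
  "initial_vertices n (mirror_graph n E) = (\<lambda>v. Suc n - v) ` terminal_vertices n E"
proof (intro set_eqI iffI)
  fix v assume v: "v \<in> initial_vertices n (mirror_graph n E)"
  have "(Suc n - v, b) \<notin> E" for b
  proof
    assume "(Suc n - v, b) \<in> E"
    then have "mirror_edge n (Suc n - v, b) \<in> mirror_graph n E" by (simp add: mirror_graph_def)
    moreover have "mirror_edge n (Suc n - v, b) = (Suc n - b, v)"
      using v by (auto simp: initial_vertices_def mirror_edge_def)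
    ultimately show False using v by (auto simp: initial_vertices_def)
  qed
  with v have "Suc n - v \<in> terminal_vertices n E" "v = Suc n - (Suc n - v)"
    by (auto simp: initial_vertices_def terminal_vertices_def)
  then show "v \<in> (\<lambda>v. Suc n - v) ` terminal_vertices n E" by blast
next
  fix v assume "v \<in> (\<lambda>v. Suc n - v) ` terminal_vertices n E"
  then obtain u where u: "v = Suc n - u" "u \<in> {1..n}" "\<And>b. (u, b) \<notin> E"
    by (auto simp: terminal_vertices_def)
  have "(w, v) \<notin> mirror_graph n E" for w
  proof
    assume "(w, v) \<in> mirror_graph n E"
    then obtain a b where "(a, b) \<in> E" "v = Suc n - a" by (auto simp: mirror_graph_def mirror_edge_def)
    moreover from this u have "a = u" by auto
    ultimately show False using u by simp
  qed
  with u show "v \<in> initial_vertices n (mirror_graph n E)"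
    by (auto simp: initial_vertices_def)
qed

lemma inj_on_Suc_diff: "inj_on (\<lambda>v. Suc n - v) {1..n}"
  by (auto simp: inj_on_def)

lemma card_terminal_vertices_mirror_graph:
  "card (terminal_vertices n (mirror_graph n E)) = card (initial_vertices n E)"
  unfolding terminal_vertices_mirror_graph
  by (rule card_image[OF inj_on_subset[OF inj_on_Suc_diff initial_vertices_subset]])

lemma card_initial_vertices_mirror_graph:
  "card (initial_vertices n (mirror_graph n E)) = card (terminal_vertices n E)"
  unfolding initial_vertices_mirror_graph
  by (rule card_image[OF inj_on_subset[OF inj_on_Suc_diff terminal_vertices_subset]])

lemma mirror_graph_insert: "mirror_graph n (insert e E) = insert (mirror_edge n e) (mirror_graph n E)"
  by (simp add: mirror_graph_def)

lemma mirror_edge_in_edge_slots: "e \<in> edge_slots n \<Longrightarrow> mirror_edge n e \<in> edge_slots n"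
  by (auto simp: edge_slots_def mirror_edge_def)

lemma mirror_edge_mirror_edge: "e \<in> edge_slots n \<Longrightarrow> mirror_edge n (mirror_edge n e) = e"
  by (auto simp: edge_slots_def mirror_edge_def)

lemma mirror_edge_in_mirror_graph_iff:
  assumes "e \<in> edge_slots n"
  shows "mirror_edge n e \<in> mirror_graph n E \<longleftrightarrow> e \<in> E"
proof
  assume "mirror_edge n e \<in> mirror_graph n E"
  then obtain d where "d \<in> E" "mirror_edge n d = mirror_edge n e"
    by (auto simp: mirror_graph_def)
  moreover from this assms have "d = e"
    by (cases d, cases e) (auto simp: edge_slots_def mirror_edge_def)
  ultimately show "e \<in> E" by simp
qed (simp add: mirror_graph_def)

lemma allowed_edges_mirror_graph:
  "allowed_edges y x n (mirror_graph n E) = mirror_edge n ` allowed_edges x y n E"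
proof (intro set_eqI iffI)
  fix d assume d: "d \<in> allowed_edges y x n (mirror_graph n E)"
  then have slot: "d \<in> edge_slots n" by (simp add: mem_allowed_edges_iff)
  have "mirror_graph n (insert (mirror_edge n d) E) = insert d (mirror_graph n E)"
    using mirror_edge_mirror_edge[OF slot] by (simp add: mirror_graph_insert)
  then have "mirror_edge n d \<in> allowed_edges x y n E"
    using d mirror_edge_in_edge_slots[OF slot] mirror_edge_in_mirror_graph_iff[of "mirror_edge n d" n E]
      card_initial_vertices_mirror_graph[of n "insert (mirror_edge n d) E"]
      card_terminal_vertices_mirror_graph[of n "insert (mirror_edge n d) E"]
    by (auto simp: mem_allowed_edges_iff mirror_edge_mirror_edge[OF slot])
  then show "d \<in> mirror_edge n ` allowed_edges x y n E"
    using mirror_edge_mirror_edge[OF slot] by (metis image_eqI)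
next
  fix d assume "d \<in> mirror_edge n ` allowed_edges x y n E"
  then obtain e where e: "e \<in> allowed_edges x y n E" and d: "d = mirror_edge n e" by blast
  then have slot: "e \<in> edge_slots n" by (simp add: mem_allowed_edges_iff)
  show "d \<in> allowed_edges y x n (mirror_graph n E)"
    using e mirror_edge_in_edge_slots[OF slot] mirror_edge_in_mirror_graph_iff[OF slot, of E]
      card_initial_vertices_mirror_graph[of n "insert e E"]
      card_terminal_vertices_mirror_graph[of n "insert e E"]
    by (auto simp: d mem_allowed_edges_iff mirror_graph_insert)
qed

lemma inj_on_mirror_edge_allowed_edges: "inj_on (mirror_edge n) (allowed_edges x y n E)"
  by (rule inj_on_inverseI[where g = "mirror_edge n"])
    (simp add: mem_allowed_edges_iff mirror_edge_mirror_edge)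

definition potential_weight :: "nat \<Rightarrow> nat \<Rightarrow> real" where
  "potential_weight k t = (\<Prod>s = Suc k..t. 2 * real s / (2 * real s + 1))"

lemma potential_weight_eq_1: "t \<le> k \<Longrightarrow> potential_weight k t = 1"
  by (simp add: potential_weight_def)

lemma potential_weight_pos: "0 < potential_weight k t"
  unfolding potential_weight_def by (intro prod_pos) simp

lemma potential_weight_Suc:
  "k \<le> t \<Longrightarrow> potential_weight k (Suc t) = potential_weight k t * (2 * real (Suc t) / (2 * real (Suc t) + 1))"
  by (simp add: potential_weight_def)

lemma potential_weight_pred:
  assumes "k < t"
  shows "potential_weight k (t - 1) = potential_weight k t + potential_weight k t / (2 * real t)"
proof -
  obtain s where t: "t = Suc s" "k \<le> s" using assms by (cases t) auto
  show ?thesis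
    using potential_weight_Suc[OF t(2)] by (simp add: t field_simps)
qed

lemma potential_weight_squared_le:
  assumes "k \<le> t"
  shows "(potential_weight k t)\<^sup>2 \<le> (real k + 1) / (real t + 1)"
  using assms
proof (induction t rule: dec_induct)
  case base
  then show ?case by (simp add: potential_weight_eq_1)
next
  case (step t)
  have "(2 * real t + 2)\<^sup>2 * (real t + 2) \<le> (real t + 1) * (2 * real t + 3)\<^sup>2"
    by (simp add: power2_eq_square algebra_simps)
  moreover have "(2 * real (Suc t) / (2 * real (Suc t) + 1))\<^sup>2 = (2 * real t + 2)\<^sup>2 / (2 * real t + 3)\<^sup>2"
    by (simp add: power_divide add_ac)
  ultimately have factor: "(2 * real (Suc t) / (2 * real (Suc t) + 1))\<^sup>2 \<le> (real t + 1) / (real t + 2)"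
    by (simp add: frac_le_eq mult.commute divide_nonpos_pos)
  have "(potential_weight k (Suc t))\<^sup>2 = (potential_weight k t)\<^sup>2 * (2 * real (Suc t) / (2 * real (Suc t) + 1))\<^sup>2"
    by (simp only: potential_weight_Suc[OF step.hyps(1)] power_mult_distrib)
  also have "\<dots> \<le> (real k + 1) / (real t + 1) * ((real t + 1) / (real t + 2))"
    using step.IH factor by (intro mult_mono) auto
  also have "\<dots> = (real k + 1) / (real (Suc t) + 1)"
    by (simp add: divide_simps)
  finally show ?case .
qed

lemma potential_weight_tendsto_0: "(\<lambda>t. potential_weight k t) \<longlonglongrightarrow> 0"
proof (rule tendsto_sandwich)
  show "\<forall>\<^sub>F t in sequentially. 0 \<le> potential_weight k t"
    by (simp add: potential_weight_pos less_imp_le)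
  show "\<forall>\<^sub>F t in sequentially. potential_weight k t \<le> sqrt ((real k + 1) / (real t + 1))"
  proof (rule eventually_sequentiallyI)
    fix t assume "k \<le> t"
    then show "potential_weight k t \<le> sqrt ((real k + 1) / (real t + 1))"
      by (rule real_le_rsqrt[OF potential_weight_squared_le])
  qed
  have "(\<lambda>t. (real k + 1) / real (Suc t)) \<longlonglongrightarrow> 0"
    by (rule LIMSEQ_Suc[OF lim_const_over_n])
  then have "(\<lambda>t. sqrt ((real k + 1) / real (Suc t))) \<longlonglongrightarrow> sqrt 0"
    by (rule tendsto_real_sqrt)
  then show "(\<lambda>t. sqrt ((real k + 1) / (real t + 1))) \<longlonglongrightarrow> 0"
    by (simp add: add.commute)
qed simp

definition terminal_potential :: "nat \<Rightarrow> nat \<Rightarrow> (nat \<times> nat) set \<Rightarrow> real" where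
  "terminal_potential k n E =
     (if 1 \<in> terminal_vertices n E then potential_weight k (card (terminal_vertices n E)) else 0)"

definition failure_potential :: "nat \<Rightarrow> nat \<Rightarrow> nat \<Rightarrow> (nat \<times> nat) set \<Rightarrow> real" where
  "failure_potential x y n E = terminal_potential y n E + terminal_potential x n (mirror_graph n E)"

lemma terminal_potential_nonneg: "0 \<le> terminal_potential k n E"
  by (simp add: terminal_potential_def less_imp_le potential_weight_pos)

lemma failure_potential_nonneg: "0 \<le> failure_potential x y n E"
  by (simp add: failure_potential_def add_nonneg_nonneg terminal_potential_nonneg)

lemma one_mem_terminal_vertices_if_stuck:
  assumes stuck: "allowed_edges x y n E = {}" and "1 \<le> x"
    and I: "x < card (initial_vertices n E)" and T: "y \<le> card (terminal_vertices n E)"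
  shows "1 \<in> terminal_vertices n E"
proof (rule ccontr)
  assume not_terminal: "1 \<notin> terminal_vertices n E"
  have "initial_vertices n E \<subseteq> {1}"
  proof
    fix v assume v: "v \<in> initial_vertices n E"
    show "v \<in> {1}"
    proof (rule ccontr)
      assume "v \<notin> {1}"
      with v have "1 < v" "v \<le> n" "(1, v) \<notin> E" by (auto simp: initial_vertices_def)
      moreover have "x \<le> card (initial_vertices n E - {v})" using v I by simp
      moreover have "terminal_vertices n E - {1} = terminal_vertices n E" using not_terminal by blast
      ultimately have "(1, v) \<in> allowed_edges x y n E"
        using T by (simp add: mem_allowed_edges)
      then show False using stuck by simp
    qed
  qed
  then have "card (initial_vertices n E) \<le> card {1::nat}"
    by (intro card_mono) simp_all
  then show False using I \<open>1 \<le> x\<close> by simp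
qed

lemma card_terminal_vertices_if_stuck:
  assumes stuck: "allowed_edges x y n E = {}" and "1 \<le> x" and "2 \<le> n"
    and I: "x < card (initial_vertices n E)" and T: "y \<le> card (terminal_vertices n E)"
  shows "card (terminal_vertices n E) = y"
proof (rule ccontr)
  assume "card (terminal_vertices n E) \<noteq> y"
  moreover have "1 \<in> terminal_vertices n E"
    using one_mem_terminal_vertices_if_stuck[OF assms(1,2) I T] .
  ultimately have "y \<le> card (terminal_vertices n E - {1})" "(1, n) \<notin> E"
    using T by (auto simp: terminal_vertices_def)
  moreover have "x \<le> card (initial_vertices n E - {n})" using I by (auto simp: card_Diff_singleton_if)
  ultimately have "(1, n) \<in> allowed_edges x y n E"
    using \<open>2 \<le> n\<close> by (simp add: mem_allowed_edges)
  then show False using stuck by simp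
qed

lemma failure_potential_ge_1_if_stuck:
  assumes stuck: "allowed_edges x y n E = {}" and "1 \<le> x" "1 \<le> y" "2 \<le> n"
    and I: "x \<le> card (initial_vertices n E)" and T: "y \<le> card (terminal_vertices n E)"
    and "\<not> is_tdg x y n E"
  shows "1 \<le> failure_potential x y n E"
proof (cases "x < card (initial_vertices n E)")
  case True
  then have "terminal_potential y n E = 1"
    using one_mem_terminal_vertices_if_stuck[OF stuck \<open>1 \<le> x\<close> True T]
      card_terminal_vertices_if_stuck[OF stuck \<open>1 \<le> x\<close> \<open>2 \<le> n\<close> True T]
    by (simp add: terminal_potential_def potential_weight_eq_1)
  then show ?thesis
    using terminal_potential_nonneg by (simp add: failure_potential_def)
next
  case False
  then have "card (initial_vertices n E) = x" using I by simp
  with assms have "y < card (terminal_vertices n E)" by (simp add: is_tdg_def)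
  then have "1 \<in> terminal_vertices n (mirror_graph n E)"
    using one_mem_terminal_vertices_if_stuck[of y x n "mirror_graph n E"] stuck \<open>1 \<le> y\<close> I
    by (simp add: allowed_edges_mirror_graph card_initial_vertices_mirror_graph
        card_terminal_vertices_mirror_graph)
  with \<open>card (initial_vertices n E) = x\<close> have "terminal_potential x n (mirror_graph n E) = 1"
    by (simp add: terminal_potential_def card_terminal_vertices_mirror_graph potential_weight_eq_1)
  then show ?thesis
    using terminal_potential_nonneg by (simp add: failure_potential_def)
qed

lemma card_filter_card_Diff_singleton_ge:
  assumes "finite S" "x \<le> card S"
  shows "card B - x \<le> card {b \<in> B. x \<le> card (S - {b})}"
proof (cases "x < card S")
  case True
  then have "{b \<in> B. x \<le> card (S - {b})} = B"
    using assms by (auto simp: card_Diff_singleton_if)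
  then show ?thesis by simp
next
  case False
  with assms have "card S = x" by simp
  show ?thesis
  proof (cases "finite B")
    case True
    have "B - S \<subseteq> {b \<in> B. x \<le> card (S - {b})}"
      using \<open>card S = x\<close> by auto
    then have "card (B - S) \<le> card {b \<in> B. x \<le> card (S - {b})}"
      using True by (intro card_mono) simp_all
    moreover have "card B - card S \<le> card (B - S)"
      using assms(1) by (rule diff_card_le_card_Diff)
    ultimately show ?thesis using \<open>card S = x\<close> by simp
  qed simp
qed

lemma card_allowed_edges_from_one_ge:
  assumes "x \<le> card (initial_vertices n E)" "y < card (terminal_vertices n E)"
    and "1 \<in> terminal_vertices n E"
  shows "n - 1 - x \<le> card {e \<in> allowed_edges x y n E. fst e = 1}"
proof -
  define B where "B = {b \<in> {2..n}. x \<le> card (initial_vertices n E - {b})}"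
  have "(\<lambda>b. (1, b)) ` B \<subseteq> {e \<in> allowed_edges x y n E. fst e = 1}"
    using assms by (auto simp: B_def mem_allowed_edges terminal_vertices_def)
  then have "card ((\<lambda>b. (1::nat, b)) ` B) \<le> card {e \<in> allowed_edges x y n E. fst e = 1}"
    by (intro card_mono) simp_all
  moreover have "card ((\<lambda>b. (1::nat, b)) ` B) = card B"
    by (rule card_image) (simp add: inj_on_def)
  moreover have "card {2..n} - x \<le> card B"
    unfolding B_def using assms(1) by (intro card_filter_card_Diff_singleton_ge) simp_all
  ultimately show ?thesis by simp
qed

lemma card_allowed_edges_from_le:
  assumes "finite S"
  shows "card {e \<in> allowed_edges x y n E. fst e \<in> S} \<le> card S * n"
proof -
  have "{e \<in> allowed_edges x y n E. fst e \<in> S} \<subseteq> S \<times> {1..n}"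
    using allowed_edges_subset by fastforce
  then have "card {e \<in> allowed_edges x y n E. fst e \<in> S} \<le> card (S \<times> {1..n})"
    using assms by (intro card_mono) simp_all
  then show ?thesis by (simp add: card_cartesian_product)
qed

lemma terminal_potential_mean_le:
  assumes "x \<le> card (initial_vertices n E)"
    and terminal_ge: "y \<le> card (terminal_vertices n E)" and "2 * x + 2 \<le> n"
  shows "(\<Sum>e\<in>allowed_edges x y n E. terminal_potential y n (insert e E))
    \<le> card (allowed_edges x y n E) * terminal_potential y n E"
proof -
  define A where "A = allowed_edges x y n E"
  define S where "S = terminal_vertices n E"
  have S_insert: "terminal_vertices n (insert e E) = S - {fst e}" for e
    by (simp add: S_def terminal_vertices_insert)
  consider (not_terminal) "1 \<notin> S" | (tight) "1 \<in> S" "card S = y" | (slack) "1 \<in> S" "y < card S"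
    using terminal_ge le_neq_implies_less unfolding S_def by blast
  then show ?thesis
  proof cases
    case not_terminal
    then have "terminal_potential y n (insert e E) = 0" for e
      by (simp add: terminal_potential_def S_insert)
    then show ?thesis by (simp add: terminal_potential_nonneg)
  next
    case tight
    have "terminal_potential y n (insert e E) = terminal_potential y n E" if "e \<in> A" for e
    proof -
      have "y \<le> card (S - {fst e})"
        using that by (cases e) (simp add: A_def S_def mem_allowed_edges)
      have "fst e \<notin> S"
      proof
        assume "fst e \<in> S"
        then have "card (S - {fst e}) < card S"
          unfolding S_def by (intro card_Diff1_less) simp_all
        with \<open>y \<le> card (S - {fst e})\<close> tight show False by simp
      qed
      then have "S - {fst e} = S" by simp
      then show ?thesis by (simp add: terminal_potential_def S_insert S_def)
    qed
    then show ?thesis by (simp add: A_def)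
  next
    case slack
    define c where "c = card S"
    define H where "H = potential_weight y c"
    define A1 where "A1 = {e \<in> A. fst e = 1}"
    define A2 where "A2 = {e \<in> A. fst e \<in> S - {1}}"
    have "0 < c" "0 < H" using slack by (auto simp: c_def H_def potential_weight_pos)
    have bound: "terminal_potential y n (insert e E)
        \<le> H + (if fst e \<in> S - {1} then H / (2 * c) else 0) - (if fst e = 1 then H else 0)" for e
    proof -
      consider "fst e = 1" | "fst e \<in> S - {1}" | "fst e \<notin> S" by blast
      then show ?thesis
      proof cases
        case 1
        then show ?thesis by (simp add: terminal_potential_def S_insert)
      next
        case 2
        then have "card (S - {fst e}) = c - 1" by (simp add: c_def S_def)
        then show ?thesis
          using 2 slack potential_weight_pred[of y c]
          by (simp add: terminal_potential_def S_insert H_def c_def)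
      next
        case 3
        then have "S - {fst e} = S" "fst e \<noteq> 1" using slack by auto
        then show ?thesis
          using 3 slack by (simp add: terminal_potential_def S_insert H_def c_def)
      qed
    qed
    have "card A2 \<le> card (S - {1}) * n"
      using card_allowed_edges_from_le[of "S - {1}" x y n E] unfolding A2_def A_def S_def by simp
    also have "\<dots> \<le> c * n"
      by (simp add: c_def S_def card_Diff1_le)
    also have "\<dots> \<le> c * (2 * card A1)"
      using card_allowed_edges_from_one_ge[of x n E y] assms slack
      unfolding A1_def A_def S_def by (intro mult_le_mono2) linarith
    finally have "real (card A2) \<le> real (c * (2 * card A1))"
      by (rule of_nat_mono)
    then have "real (card A2) * H \<le> 2 * real c * real (card A1) * H"
      using \<open>0 < H\<close> by (intro mult_right_mono) simp_all
    then have gain_le_loss: "real (card A2) * (H / (2 * c)) \<le> real (card A1) * H"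
      using \<open>0 < c\<close> by (simp add: field_simps)
    have "(\<Sum>e\<in>A. terminal_potential y n (insert e E))
        \<le> (\<Sum>e\<in>A. H + (if fst e \<in> S - {1} then H / (2 * c) else 0) - (if fst e = 1 then H else 0))"
      by (intro sum_mono bound)
    also have "\<dots> = card A * H + card A2 * (H / (2 * c)) - card A1 * H"
      by (simp add: sum.distrib sum_subtractf A1_def A2_def A_def flip: sum.inter_filter)
    also have "\<dots> \<le> card A * terminal_potential y n E"
      using gain_le_loss slack by (simp add: terminal_potential_def H_def c_def S_def)
    finally show ?thesis by (simp add: A_def)
  qed
qed

lemma mirrored_terminal_potential_mean_le:
  assumes "x \<le> card (initial_vertices n E)" "y \<le> card (terminal_vertices n E)" "2 * y + 2 \<le> n"
  shows "(\<Sum>e\<in>allowed_edges x y n E. terminal_potential x n (mirror_graph n (insert e E)))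
    \<le> card (allowed_edges x y n E) * terminal_potential x n (mirror_graph n E)"
proof -
  let ?A = "allowed_edges x y n E" and ?F = "mirror_graph n E"
  have inj: "inj_on (mirror_edge n) ?A" by (rule inj_on_mirror_edge_allowed_edges)
  have "(\<Sum>e\<in>?A. terminal_potential x n (mirror_graph n (insert e E)))
      = (\<Sum>d\<in>mirror_edge n ` ?A. terminal_potential x n (insert d ?F))"
    by (simp add: sum.reindex[OF inj] mirror_graph_insert)
  also have "\<dots> = (\<Sum>d\<in>allowed_edges y x n ?F. terminal_potential x n (insert d ?F))"
    by (simp add: allowed_edges_mirror_graph)
  also have "\<dots> \<le> card (allowed_edges y x n ?F) * terminal_potential x n ?F"
    using assms by (intro terminal_potential_mean_le)
      (simp_all add: card_initial_vertices_mirror_graph card_terminal_vertices_mirror_graph)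
  also have "card (allowed_edges y x n ?F) = card ?A"
    by (simp add: allowed_edges_mirror_graph card_image[OF inj])
  finally show ?thesis .
qed

lemma failure_potential_mean_le:
  assumes "x \<le> card (initial_vertices n E)" "y \<le> card (terminal_vertices n E)"
    and "1 \<le> x" "1 \<le> y" "2 * (x + y) \<le> n"
  shows "(\<Sum>e\<in>allowed_edges x y n E. failure_potential x y n (insert e E))
    \<le> card (allowed_edges x y n E) * failure_potential x y n E"
  using terminal_potential_mean_le[of x n E y] mirrored_terminal_potential_mean_le[of x n E y] assms
  by (simp add: failure_potential_def sum.distrib distrib_left)

lemma measure_bind_pmf_of_set:
  assumes "finite A" "A \<noteq> {}"
  shows "measure_pmf.prob (pmf_of_set A \<bind> f) B = (\<Sum>e\<in>A. measure_pmf.prob (f e) B) / card A"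
proof -
  have "measure_pmf.prob (pmf_of_set A \<bind> f) B
      = (\<integral>e. measure_pmf.prob (f e) B \<partial>measure_pmf (pmf_of_set A))"
    unfolding measure_pmf_bind using measurable_measure_pmf[of f]
    by (subst measure_pmf.measure_bind[where N = "count_space UNIV"]) (auto dest: measurable_space)
  also have "\<dots> = (\<Sum>e\<in>A. measure_pmf.prob (f e) B) / card A"
    using assms by (simp add: integral_pmf_of_set)
  finally show ?thesis .
qed

lemma stuck_failure_probability_le_failure_potential:
  assumes "allowed_edges x y n E = {}" "1 \<le> x" "1 \<le> y" "2 * (x + y) \<le> n"
    and "x \<le> card (initial_vertices n E)" "y \<le> card (terminal_vertices n E)"
  shows "measure_pmf.prob (return_pmf E) {F. \<not> is_tdg x y n F} \<le> failure_potential x y n E"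
  using failure_potential_ge_1_if_stuck[OF assms(1-3) _ assms(5,6)] assms(2-4)
    failure_potential_nonneg[of x y n E]
  by (cases "is_tdg x y n E") auto

lemma failure_probability_le_failure_potential:
  assumes "1 \<le> x" "1 \<le> y" "2 * (x + y) \<le> n"
  shows "card (allowed_edges x y n E) \<le> k \<Longrightarrow>
    x \<le> card (initial_vertices n E) \<Longrightarrow> y \<le> card (terminal_vertices n E) \<Longrightarrow>
    measure_pmf.prob (edge_process_fuel x y n k E) {F. \<not> is_tdg x y n F} \<le> failure_potential x y n E"
proof (induction k arbitrary: E)
  case 0
  then show ?case using stuck_failure_probability_le_failure_potential assms by simp
next
  case (Suc k)
  show ?case
  proof (cases "allowed_edges x y n E = {}")
    case True
    then show ?thesis using stuck_failure_probability_le_failure_potential assms Suc.prems by simp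
  next
    case False
    define A where "A = allowed_edges x y n E"
    define f where "f e = (if is_tdg x y n (insert e E) then return_pmf (insert e E)
      else edge_process_fuel x y n k (insert e E))" for e
    have step: "edge_process_fuel x y n (Suc k) E = pmf_of_set A \<bind> f"
      using False by (simp add: A_def f_def[abs_def])
    have each: "measure_pmf.prob (f e) {F. \<not> is_tdg x y n F} \<le> failure_potential x y n (insert e E)"
      if e: "e \<in> A" for e
    proof (cases "is_tdg x y n (insert e E)")
      case True
      then show ?thesis by (simp add: f_def failure_potential_nonneg)
    next
      case False
      have "card (allowed_edges x y n (insert e E)) \<le> k"
        using card_allowed_edges_insert[of e x y n E] e Suc.prems(1) by (simp add: A_def)
      moreover have "x \<le> card (initial_vertices n (insert e E))" "y \<le> card (terminal_vertices n (insert e E))"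
        using e by (simp_all add: A_def mem_allowed_edges_iff)
      ultimately show ?thesis
        using Suc.IH False by (simp add: f_def)
    qed
    have "measure_pmf.prob (edge_process_fuel x y n (Suc k) E) {F. \<not> is_tdg x y n F}
        = (\<Sum>e\<in>A. measure_pmf.prob (f e) {F. \<not> is_tdg x y n F}) / card A"
      unfolding step using False by (intro measure_bind_pmf_of_set) (simp_all add: A_def)
    also have "\<dots> \<le> (\<Sum>e\<in>A. failure_potential x y n (insert e E)) / card A"
      by (intro divide_right_mono sum_mono each) simp_all
    also have "\<dots> \<le> failure_potential x y n E"
      using failure_potential_mean_le[of x n E y] Suc.prems assms False
      by (simp add: A_def divide_le_eq mult.commute)
    finally show ?thesis .
  qed
qed

theorem mainTheorem18:
  fixes x y :: nat
  assumes "x \<ge> 1" and "y \<ge> 1"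
  shows "(\<lambda>n. measure_pmf.prob (edge_process x y n) {E. is_tdg x y n E}) \<longlonglongrightarrow> 1"
proof -
  let ?fail = "\<lambda>n. measure_pmf.prob (edge_process x y n) {E. \<not> is_tdg x y n E}"
  have fail_le: "?fail n \<le> potential_weight y n + potential_weight x n" if "2 * (x + y) \<le> n" for n
  proof -
    have "?fail n \<le> failure_potential x y n {}"
      unfolding edge_process_def using assms that card_allowed_edges_le[of x y n "{}"]
      by (intro failure_probability_le_failure_potential) simp_all
    also have "\<dots> = potential_weight y n + potential_weight x n"
      using assms that by (simp add: failure_potential_def terminal_potential_def mirror_graph_def)
    finally show ?thesis .
  qed
  have "?fail \<longlonglongrightarrow> 0"
  proof (rule tendsto_sandwich[OF _ _ tendsto_const])
    show "\<forall>\<^sub>F n in sequentially. ?fail n \<le> potential_weight y n + potential_weight x n"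
      using fail_le by (rule eventually_sequentiallyI)
    show "(\<lambda>n. potential_weight y n + potential_weight x n) \<longlonglongrightarrow> 0"
      using tendsto_add[OF potential_weight_tendsto_0 potential_weight_tendsto_0] by simp
  qed simp
  moreover have "measure_pmf.prob (edge_process x y n) {E. is_tdg x y n E} = 1 - ?fail n" for n
    using measure_pmf.prob_compl[of "{E. \<not> is_tdg x y n E}" "edge_process x y n"]
    by (simp add: Compl_eq_Diff_UNIV[symmetric] Collect_neg_eq[symmetric])
  ultimately show ?thesis
    using tendsto_diff[OF tendsto_const, of ?fail 0 sequentially 1] by simp
qed

end
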